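(* Let $\alpha\in(1,3)$, $n\ge2$, $\mu\ge0$, and let $V(r,\varphi)$ be the Maxwell-ring potential in polar coordinates described in the context. Then there is a positive function $\omega(r,\varphi)$ such that $$V_\varphi(r,\varphi)=-\sin(n\varphi)\,\omega(r,\varphi)$$ for all $(r,\varphi)$ in the domain of $V$ ($r>0$, $re^{i\varphi}$ not a vertex $e^{ij\zeta}$).
   Context: Let $\zeta=2\pi/n$, $\phi_\alpha'(r)=-r^{-\alpha}$, $s=2^{-\alpha}\sum_{j=1}^{n-1}\sin^{-(\alpha-1)}(j\zeta/2)$. In polar coordinates $u=re^{i\varphi}$, the planar potential of a satellite attracted by $n$ unit masses at $e^{ij\zeta}$ and a central mass $\mu$ at $0$ (rescaled) is $$V(r,\varphi)=\frac{r^2}{2}+\frac{\mu}{s+\mu}\phi_\alpha(r)+\sum_{j=1}^n\frac1{s+\mu}\phi_\alpha\big(\|r-e^{i(j\zeta-\varphi)}\|\big).$$ *)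

theory Defs
  imports "HOL-Analysis.Analysis"
begin

text \<open>Potential with phi_alpha' (r) = - r^(-alpha); for alpha > 1 we take the
antiderivative r^(1-alpha)/(alpha-1) (the additive constant is irrelevant).\<close>
definition phi_alpha :: "real \<Rightarrow> real \<Rightarrow> real" where
  "phi_alpha \<alpha> r = r powr (1 - \<alpha>) / (\<alpha> - 1)"

definition zeta :: "nat \<Rightarrow> real" where
  "zeta n = 2 * pi / real n"

definition maxwell_s :: "nat \<Rightarrow> real \<Rightarrow> real" where
  "maxwell_s n \<alpha> = 2 powr (- \<alpha>) *
     (\<Sum>j = 1..n - 1. sin (real j * zeta n / 2) powr (- (\<alpha> - 1)))"

definition maxwell_V :: "nat \<Rightarrow> real \<Rightarrow> real \<Rightarrow> real \<Rightarrow> real \<Rightarrow> real" where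
  "maxwell_V n \<alpha> \<mu> r \<phi> =
     r\<^sup>2 / 2 + \<mu> / (maxwell_s n \<alpha> + \<mu>) * phi_alpha \<alpha> r
     + (\<Sum>j = 1..n. 1 / (maxwell_s n \<alpha> + \<mu>) *
          phi_alpha \<alpha> (cmod (complex_of_real r - cis (real j * zeta n - \<phi>))))"

definition maxwell_dom :: "nat \<Rightarrow> real \<Rightarrow> real \<Rightarrow> bool" where
  "maxwell_dom n r \<phi> \<longleftrightarrow> 0 < r \<and>
     (\<forall>j\<in>{1..n}. complex_of_real r * cis \<phi> \<noteq> cis (real j * zeta n))"

end

theory Submission
  imports Defs
begin

text \<open>
  With \<theta>_j = j\<zeta> - \<phi>, A_j = |r - e^(i\<theta>_j)|^2 = r^2 - 2r cos \<theta>_j + 1 and \<gamma> = (\<alpha> - 1)/2 \<in> (0,1),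
  the derivative V_\<phi> is a positive multiple of \<Sum>_j sin \<theta>_j A_j^(-\<gamma>-1).
  As \<integral>_0^\<infinity> x^(-\<gamma>) (x + A)^(-2) dx = c_\<gamma> A^(-\<gamma>-1) with c_\<gamma> > 0 (convergent at 0
  because \<gamma> < 1, i.e. \<alpha> < 3), that sum is an average with
  positive weight x^(-\<gamma>) over x > 0 of \<Sum>_j sin \<theta>_j / (B - 2r cos \<theta>_j)^2, where B = x + 1 + r^2 > 2r.
  Up to the factor 2r this is the \<phi>-derivative of \<Sum>_j 1 / (B - 2r cos \<theta>_j). Writing
  B - 2r cos \<theta> = \<lambda> (1 + \<rho>^2 - 2\<rho> cos \<theta>) with 0 < \<rho> < 1 makes the latter a sum of Poisson kernels
  P_\<rho> over the n-th roots of unity, which is n P_(\<rho>^n)(n\<phi>): averaging the power series of the Cayley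
  transform (1 + z)/(1 - z) over the roots keeps only the powers divisible by n.
  Finally d/d\<phi> P_(\<rho>^n)(n\<phi>) is -sin(n\<phi>) times a positive number.
\<close>

section \<open>Poisson kernel sums over roots of unity\<close>

definition poisson_kernel :: "real \<Rightarrow> real \<Rightarrow> real" where
  "poisson_kernel \<rho> \<theta> = (1 - \<rho>\<^sup>2) / (1 + \<rho>\<^sup>2 - 2 * \<rho> * cos \<theta>)"

lemma cis_zeta_power_eq_1:
  assumes "0 < n"
  shows "cis (real j * zeta n) ^ n = 1"
proof -
  have "cis (real j * zeta n) ^ n = cis (real n * (real j * zeta n))"
    by (simp add: Complex.DeMoivre)
  also have "real n * (real j * zeta n) = 2 * pi * real j"
    using assms by (simp add: zeta_def)
  finally show ?thesis by simp
qed

lemma sum_cis_zeta_power_eq_0: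
  assumes "0 < m" "m < n"
  shows "(\<Sum>j=1..n. cis (real j * zeta n) ^ m) = 0"
proof -
  define q where "q = cis (real m * zeta n)"
  have "q \<noteq> 1"
  proof
    assume "q = 1"
    then have "cos (real m * zeta n) = 1" unfolding q_def by (metis cis.simps(1) one_complex.simps(1))
    then obtain k :: int where k: "real m * zeta n = 2 * pi * k"
      using cos_one_2pi_int by (metis mult.commute mult.left_commute)
    have "0 < real m * zeta n" "real m * zeta n < 2 * pi"
      using assms by (auto simp: zeta_def field_simps)
    with k have "0 < k" "k < 1" by (auto simp: zero_less_mult_iff mult_less_cancel_left1)
    then show False by simp
  qed
  have "(\<Sum>j=1..n. cis (real j * zeta n) ^ m) = (\<Sum>j=1..n. q ^ j)"
    by (intro sum.cong) (auto simp: q_def Complex.DeMoivre power_mult[symmetric] mult_ac)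
  also have "\<dots> = (\<Sum>j\<in>Suc ` {..<n}. q ^ j)"
    by (simp add: image_Suc_lessThan)
  also have "\<dots> = (\<Sum>j<n. q * q ^ j)"
    by (simp add: sum.reindex)
  also have "\<dots> = 0"
    using \<open>q \<noteq> 1\<close> cis_zeta_power_eq_1[of n m] assms
    by (simp add: sum_distrib_left[symmetric] sum_gp_strict q_def)
  finally show ?thesis .
qed

lemma Re_cayley_transform:
  "Re ((1 + y) / (1 - y)) = (1 - (cmod y)\<^sup>2) / (cmod (1 - y))\<^sup>2"
proof -
  have "(cmod (1 - y))\<^sup>2 = (Re (1 - y))\<^sup>2 + (Im (1 - y))\<^sup>2" "(cmod y)\<^sup>2 = (Re y)\<^sup>2 + (Im y)\<^sup>2"
    by (simp_all only: cmod_power2)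
  then show ?thesis by (simp add: Re_divide power2_eq_square algebra_simps)
qed

lemma poisson_kernel_eq_Re_cayley:
  "poisson_kernel \<rho> \<theta> = Re ((1 + \<rho> * cis \<theta>) / (1 - \<rho> * cis \<theta>))"
proof -
  have "(cmod (1 - \<rho> * cis \<theta>))\<^sup>2 = 1 + \<rho>\<^sup>2 - 2 * \<rho> * cos \<theta>"
    unfolding cmod_power2 by (simp add: power2_eq_square algebra_simps)
      (metis distrib_left mult.right_neutral sin_cos_squared_add3)
  moreover have "(cmod (\<rho> * cis \<theta>))\<^sup>2 = \<rho>\<^sup>2" by (simp add: norm_mult)
  ultimately show ?thesis
    by (simp add: poisson_kernel_def Re_cayley_transform)
qed

lemma sum_inverse_one_minus_roots_of_unity:
  fixes z :: complex
  assumes "0 < n" "z ^ n \<noteq> 1"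
  shows "(\<Sum>j=1..n. 1 / (1 - z * cis (real j * zeta n))) = of_nat n / (1 - z ^ n)"
proof -
  define c where "c j = cis (real j * zeta n)" for j :: nat
  have cn: "c j ^ n = 1" for j
    unfolding c_def by (rule cis_zeta_power_eq_1[OF assms(1)])
  have "1 / (1 - z * c j) = (\<Sum>m<n. z ^ m * c j ^ m) / (1 - z ^ n)" for j
  proof -
    have e: "1 - z ^ n = (1 - z * c j) * (\<Sum>m<n. z ^ m * c j ^ m)"
      using one_diff_power_eq[of "z * c j" n] by (simp add: cn power_mult_distrib)
    with assms(2) have "1 - z * c j \<noteq> 0" by auto
    with e assms(2) show ?thesis by (simp add: field_simps)
  qed
  then have "(\<Sum>j=1..n. 1 / (1 - z * c j)) = (\<Sum>m<n. z ^ m * (\<Sum>j=1..n. c j ^ m)) / (1 - z ^ n)"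
    by (simp add: sum_divide_distrib[symmetric] sum_distrib_left) (rule disjI2, rule sum.swap)
  also have "(\<Sum>m<n. z ^ m * (\<Sum>j=1..n. c j ^ m)) = (\<Sum>m\<in>{0}. z ^ m * (\<Sum>j=1..n. c j ^ m))"
    by (rule sum.mono_neutral_right)
      (use assms sum_cis_zeta_power_eq_0[of _ n] in \<open>auto simp: c_def\<close>)
  finally show ?thesis by (simp add: c_def)
qed

lemma sum_cayley_roots_of_unity:
  fixes z :: complex
  assumes "0 < n" "cmod z < 1"
  shows "(\<Sum>j=1..n. (1 + z * cis (real j * zeta n)) / (1 - z * cis (real j * zeta n)))
         = of_nat n * ((1 + z ^ n) / (1 - z ^ n))"
proof -
  have "cmod (z ^ n) < 1"
    using assms by (simp add: norm_power power_less_one_iff)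
  then have zn: "z ^ n \<noteq> 1" by auto
  have "1 - z * cis (real j * zeta n) \<noteq> 0" for j
  proof
    assume "1 - z * cis (real j * zeta n) = 0"
    then have "cmod (z * cis (real j * zeta n)) = 1"
      by (metis eq_iff_diff_eq_0 norm_one)
    with assms show False by (simp add: norm_mult)
  qed
  then have "(1 + z * cis (real j * zeta n)) / (1 - z * cis (real j * zeta n))
      = 2 * (1 / (1 - z * cis (real j * zeta n))) - 1" for j
    by (simp add: field_simps)
  then have "(\<Sum>j=1..n. (1 + z * cis (real j * zeta n)) / (1 - z * cis (real j * zeta n)))
      = 2 * (\<Sum>j=1..n. 1 / (1 - z * cis (real j * zeta n))) - of_nat n"
    by (simp only: sum_subtractf sum_distrib_left[symmetric]) simp
  also have "\<dots> = 2 * (of_nat n / (1 - z ^ n)) - of_nat n"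
    by (simp only: sum_inverse_one_minus_roots_of_unity[OF assms(1) zn])
  also have "\<dots> = of_nat n * ((1 + z ^ n) / (1 - z ^ n))"
    using zn by (simp add: field_simps)
  finally show ?thesis .
qed

lemma sum_poisson_kernel_roots_of_unity:
  assumes "0 < n" "0 \<le> \<rho>" "\<rho> < 1"
  shows "(\<Sum>j=1..n. poisson_kernel \<rho> (real j * zeta n - \<phi>))
       = real n * poisson_kernel (\<rho> ^ n) (real n * \<phi>)"
proof -
  define z where "z = complex_of_real \<rho> * cis (- \<phi>)"
  have "\<rho> * cis (real j * zeta n - \<phi>) = z * cis (real j * zeta n)" for j
    by (simp add: z_def cis_mult)
  moreover have "z ^ n = \<rho> ^ n * cis (- (real n * \<phi>))"
    by (simp add: z_def power_mult_distrib Complex.DeMoivre)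
  moreover have "cmod z < 1"
    using assms by (simp add: z_def norm_mult)
  ultimately have "(\<Sum>j=1..n. poisson_kernel \<rho> (real j * zeta n - \<phi>))
      = Re (of_nat n * ((1 + \<rho> ^ n * cis (- (real n * \<phi>))) / (1 - \<rho> ^ n * cis (- (real n * \<phi>)))))"
    using sum_cayley_roots_of_unity[OF assms(1)]
    by (simp add: poisson_kernel_eq_Re_cayley flip: Re_sum)
  also have "\<dots> = real n * poisson_kernel (\<rho> ^ n) (real n * \<phi>)"
    by (simp only: times_complex.sel complex_Re_of_nat complex_Im_of_nat
        poisson_kernel_eq_Re_cayley[symmetric]) (simp add: poisson_kernel_def)
  finally show ?thesis .
qed

lemma poisson_denominator_pos:
  fixes \<rho> \<theta> :: real
  assumes "0 \<le> \<rho>" "\<rho> < 1"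
  shows "0 < 1 + \<rho>\<^sup>2 - 2 * \<rho> * cos \<theta>"
proof -
  have "\<rho> * cos \<theta> \<le> \<rho>" using assms by (simp add: mult_left_le)
  then have "(1 - \<rho>)\<^sup>2 \<le> 1 + \<rho>\<^sup>2 - 2 * \<rho> * cos \<theta>"
    by (simp add: power2_eq_square algebra_simps)
  moreover have "0 < (1 - \<rho>)\<^sup>2" using assms by simp
  ultimately show ?thesis by linarith
qed

lemma poisson_kernel_has_real_derivative:
  assumes "0 \<le> \<rho>" "\<rho> < 1"
  shows "(poisson_kernel \<rho> has_real_derivative
           - sin \<theta> * (2 * \<rho> * (1 - \<rho>\<^sup>2) / (1 + \<rho>\<^sup>2 - 2 * \<rho> * cos \<theta>)\<^sup>2)) (at \<theta>)"
proof -
  have "((\<lambda>\<theta>. (1 - \<rho>\<^sup>2) / (1 + \<rho>\<^sup>2 - 2 * \<rho> * cos \<theta>)) has_real_derivative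
      - ((1 - \<rho>\<^sup>2) * (- (2 * \<rho> * - sin \<theta>))) / (1 + \<rho>\<^sup>2 - 2 * \<rho> * cos \<theta>)\<^sup>2) (at \<theta>)"
    using poisson_denominator_pos[OF assms, of \<theta>]
    by (auto intro!: derivative_eq_intros simp: power2_eq_square)
  then show ?thesis
    unfolding poisson_kernel_def[abs_def] by (simp add: field_simps)
qed

lemma obtain_poisson_scaling:
  fixes r B :: real
  assumes "0 < r" "2 * r < B"
  obtains l \<rho> where "0 < l" "0 < \<rho>" "\<rho> < 1" "B = l * (1 + \<rho>\<^sup>2)" "r = l * \<rho>"
proof
  define s where "s = sqrt (B\<^sup>2 - 4 * r\<^sup>2)"
  have "0 < (B - 2 * r) * (B + 2 * r)"
    using assms by (intro mult_pos_pos) auto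
  then have "0 < B\<^sup>2 - 4 * r\<^sup>2"
    by (simp add: power2_eq_square algebra_simps)
  then have s: "0 \<le> s" "s\<^sup>2 = B\<^sup>2 - 4 * r\<^sup>2" by (simp_all add: s_def)
  have Bs: "0 < B + s" using assms s by linarith
  show "0 < (B + s) / 2" "0 < 2 * r / (B + s)" "2 * r / (B + s) < 1"
    using assms s Bs by (simp_all add: divide_less_eq)
  show "r = (B + s) / 2 * (2 * r / (B + s))" using Bs by simp
  have "(B + s) / 2 * (1 + (2 * r / (B + s))\<^sup>2) = ((B + s)\<^sup>2 + 4 * r\<^sup>2) / (2 * (B + s))"
    using Bs by (simp add: divide_simps) (simp add: power2_eq_square algebra_simps)
  also have "(B + s)\<^sup>2 + 4 * r\<^sup>2 = 2 * B * (B + s)"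
    using s(2) by (simp add: power2_eq_square algebra_simps)
  also have "2 * B * (B + s) / (2 * (B + s)) = B"
    using Bs by (simp add: field_simps)
  finally show "B = (B + s) / 2 * (1 + (2 * r / (B + s))\<^sup>2)"
    by (rule sym)
qed

lemma sum_inverse_shifted_cos_eq_poisson_kernel:
  fixes r B :: real
  assumes "0 < n" "0 < r" "2 * r < B"
  obtains c \<rho> where "0 < c" "0 < \<rho>" "\<rho> < 1"
    "\<And>x. (\<Sum>j=1..n. 1 / (B - 2 * r * cos (real j * zeta n - x)))
           = c * poisson_kernel (\<rho> ^ n) (real n * x)"
proof -
  obtain l \<rho> where l: "0 < l" "0 < \<rho>" "\<rho> < 1" "B = l * (1 + \<rho>\<^sup>2)" "r = l * \<rho>"
    using obtain_poisson_scaling[OF assms(2,3)] .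
  have "1 / (B - 2 * r * cos \<theta>) = 1 / (l * (1 - \<rho>\<^sup>2)) * poisson_kernel \<rho> \<theta>" for \<theta>
  proof -
    have "B - 2 * r * cos \<theta> = l * (1 + \<rho>\<^sup>2 - 2 * \<rho> * cos \<theta>)"
      using l by (simp add: algebra_simps)
    moreover have "1 - \<rho>\<^sup>2 \<noteq> 0" using l by (simp add: abs_square_less_1 less_imp_neq)
    moreover have "0 < 1 + \<rho>\<^sup>2 - 2 * \<rho> * cos \<theta>" using poisson_denominator_pos[of \<rho> \<theta>] l by simp
    ultimately show ?thesis using l by (simp add: poisson_kernel_def)
  qed
  then have "(\<Sum>j=1..n. 1 / (B - 2 * r * cos (real j * zeta n - x)))
      = real n / (l * (1 - \<rho>\<^sup>2)) * poisson_kernel (\<rho> ^ n) (real n * x)" for x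
    using sum_poisson_kernel_roots_of_unity[OF assms(1), of \<rho>] l
    by (simp add: sum_divide_distrib[symmetric])
  moreover have "0 < real n / (l * (1 - \<rho>\<^sup>2))"
    using assms l by (simp add: abs_square_less_1)
  ultimately show thesis using l that by blast
qed

lemma sum_sin_div_shifted_cos_sq_sign:
  fixes r B \<phi> :: real
  assumes "0 < n" "0 < r" "2 * r < B"
  shows "\<exists>w>0. (\<Sum>j=1..n. sin (real j * zeta n - \<phi>) / (B - 2 * r * cos (real j * zeta n - \<phi>))\<^sup>2)
               = - sin (real n * \<phi>) * w"
proof -
  obtain c \<rho> where c: "0 < c" "0 < \<rho>" "\<rho> < 1" and
    F_eq: "\<And>x. (\<Sum>j=1..n. 1 / (B - 2 * r * cos (real j * zeta n - x)))
           = c * poisson_kernel (\<rho> ^ n) (real n * x)"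
    using sum_inverse_shifted_cos_eq_poisson_kernel[OF assms] by blast
  define T where "T = (\<Sum>j=1..n. sin (real j * zeta n - \<phi>) / (B - 2 * r * cos (real j * zeta n - \<phi>))\<^sup>2)"
  define D where "D = 1 + (\<rho> ^ n)\<^sup>2 - 2 * \<rho> ^ n * cos (real n * \<phi>)"
  have \<rho>n: "0 < \<rho> ^ n" "\<rho> ^ n < 1"
    using c assms by (simp_all add: power_less_one_iff)
  have D: "0 < D"
    unfolding D_def using \<rho>n by (intro poisson_denominator_pos) auto
  have den: "B \<noteq> 2 * r * cos \<theta>" for \<theta>
    using assms by (smt (verit) cos_le_one mult_left_le)
  have "((\<lambda>x. \<Sum>j=1..n. 1 / (B - 2 * r * cos (real j * zeta n - x))) has_real_derivative 2 * r * T) (at \<phi>)"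
    unfolding T_def sum_distrib_left
    by (intro DERIV_sum) (auto intro!: derivative_eq_intros simp: power2_eq_square den)
  moreover have "((\<lambda>x. c * poisson_kernel (\<rho> ^ n) (real n * x)) has_real_derivative
      c * (- sin (real n * \<phi>) * (2 * \<rho> ^ n * (1 - (\<rho> ^ n)\<^sup>2) / D\<^sup>2) * real n)) (at \<phi>)"
    unfolding D_def using \<rho>n
    by (intro DERIV_cmult DERIV_chain2[OF poisson_kernel_has_real_derivative]
        derivative_eq_intros) auto
  ultimately have "2 * r * T = c * (- sin (real n * \<phi>) * (2 * \<rho> ^ n * (1 - (\<rho> ^ n)\<^sup>2) / D\<^sup>2) * real n)"
    unfolding F_eq by (rule DERIV_unique)
  then have "T = - sin (real n * \<phi>) * (c * \<rho> ^ n * (1 - (\<rho> ^ n)\<^sup>2) * real n / (r * D\<^sup>2))"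
    using assms D by (simp add: field_simps)
  moreover have "0 < c * \<rho> ^ n * (1 - (\<rho> ^ n)\<^sup>2) * real n / (r * D\<^sup>2)"
    using c \<rho>n assms D by (simp add: abs_square_less_1)
  ultimately show ?thesis unfolding T_def by blast
qed

section \<open>An integral representation of negative powers\<close>

text \<open>The integrand of \<integral>_0^\<infinity> x^(-\<gamma>) (x + A)^(-2) dx = A^(-\<gamma>-1) \<integral>_0^\<infinity> x^(-\<gamma>) (x + 1)^(-2) dx, extended by 0.\<close>

definition stieltjes_kernel :: "real \<Rightarrow> real \<Rightarrow> real \<Rightarrow> real" where
  "stieltjes_kernel \<gamma> A x = indicator {0<..} x * (x powr (- \<gamma>) / (x + A)\<^sup>2)"

lemma integral_pos_of_pos_on_halfline:
  fixes h :: "real \<Rightarrow> real"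
  assumes "integrable lebesgue h" "\<And>x. 0 \<le> h x" "\<And>x. 0 < x \<Longrightarrow> 0 < h x"
  shows "0 < integral\<^sup>L lebesgue h"
proof -
  have "integral\<^sup>L lebesgue h \<noteq> 0"
  proof
    assume "integral\<^sup>L lebesgue h = 0"
    then have "AE x in lebesgue. h x = 0"
      using integral_nonneg_eq_0_iff_AE[of lebesgue h] assms by auto
    then obtain N where N: "{x \<in> space lebesgue. h x \<noteq> 0} \<subseteq> N" "emeasure lebesgue N = 0"
      "N \<in> sets lebesgue"
      by (rule AE_E)
    have "{1..2} \<subseteq> N"
    proof
      fix x :: real
      assume "x \<in> {1..2}"
      then have "h x \<noteq> 0" using assms(3)[of x] by auto
      then show "x \<in> N" using N(1) by auto
    qed
    then have "emeasure lebesgue {1..2::real} \<le> emeasure lebesgue N"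
      using N(3) by (rule emeasure_mono)
    with N(2) show False by simp
  qed
  moreover have "0 \<le> integral\<^sup>L lebesgue h"
    using assms by (intro integral_nonneg_AE) auto
  ultimately show ?thesis by simp
qed

lemma integral_eq_sign_times_pos:
  fixes h :: "real \<Rightarrow> real"
  assumes "integrable lebesgue h" "\<And>x. x \<le> 0 \<Longrightarrow> h x = 0"
    and "\<And>x. 0 < x \<Longrightarrow> \<exists>w>0. h x = c * w"
  shows "\<exists>w>0. integral\<^sup>L lebesgue h = c * w"
proof (cases "c = 0")
  case True
  then have "h = (\<lambda>x. 0)"
    using assms(2,3) by (metis linorder_not_less mult_zero_left)
  with True show ?thesis by (intro exI[of _ 1]) simp
next
  case False
  have "0 < integral\<^sup>L lebesgue (\<lambda>x. h x / c)"
  proof (rule integral_pos_of_pos_on_halfline)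
    show "integrable lebesgue (\<lambda>x. h x / c)" using assms(1) by simp
    show pos: "0 < h x / c" if "0 < x" for x
      using assms(3)[OF that] False by auto
    show "0 \<le> h x / c" for x
      using pos[of x] assms(2)[of x] by (cases "0 < x") auto
  qed
  moreover have "integral\<^sup>L lebesgue h = c * integral\<^sup>L lebesgue (\<lambda>x. h x / c)"
    using False by simp
  ultimately show ?thesis by blast
qed

lemma integrable_stieltjes_kernel_1:
  assumes "0 < \<gamma>" "\<gamma> < 1"
  shows "integrable lebesgue (stieltjes_kernel \<gamma> 1)"
proof (rule Bochner_Integration.integrable_bound [OF _ _ AE_I2])
  have "integrable lebesgue (\<lambda>x. indicat_real {0<..1} x *\<^sub>R x powr (- \<gamma>))"
    using assms by (intro nonnegative_absolutely_integrable_1 [unfolded set_integrable_def]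
        integrable_on_powr_from_0') auto
  moreover have "integrable lebesgue (\<lambda>x. indicat_real {1..} x *\<^sub>R x powr (-2::real))"
    using has_integral_powr_to_inf[of "-2" 1]
    by (intro nonnegative_absolutely_integrable_1 [unfolded set_integrable_def])
      (auto simp: integrable_on_def)
  ultimately show "integrable lebesgue
      (\<lambda>x. indicat_real {0<..1} x *\<^sub>R x powr (- \<gamma>) + indicat_real {1..} x *\<^sub>R x powr (-2::real))"
    by (rule Bochner_Integration.integrable_add)
  have "continuous_on {0<..} (\<lambda>x::real. x powr (- \<gamma>) / (x + 1)\<^sup>2)"
    by (intro continuous_intros) (auto simp: add_nonneg_eq_0_iff)
  then have "(\<lambda>x. indicator {0<..} x *\<^sub>R (x powr (- \<gamma>) / (x + 1)\<^sup>2)) \<in> borel_measurable borel"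
    by (intro borel_measurable_continuous_on_indicator) auto
  then show "stieltjes_kernel \<gamma> 1 \<in> borel_measurable lebesgue"
    unfolding stieltjes_kernel_def[abs_def] by (intro measurable_completion) simp
  fix x :: real
  show "norm (stieltjes_kernel \<gamma> 1 x)
        \<le> norm (indicat_real {0<..1} x *\<^sub>R x powr (- \<gamma>) + indicat_real {1..} x *\<^sub>R x powr (-2::real))"
  proof (cases "x \<le> 0")
    case True
    then show ?thesis by (simp add: stieltjes_kernel_def indicator_def)
  next
    case False
    then have x: "0 < x" by simp
    show ?thesis
    proof (cases "x \<le> 1")
      case True
      have "x powr (- \<gamma>) / (x + 1)\<^sup>2 \<le> x powr (- \<gamma>)"
        using x by (simp add: divide_le_eq)
      then show ?thesis using x True by (simp add: stieltjes_kernel_def indicator_def)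
    next
      case False
      have "x powr (- \<gamma>) \<le> 1"
        using False assms by (simp add: powr_minus inverse_le_1_iff ge_one_powr_ge_zero)
      then have "x powr (- \<gamma>) / (x + 1)\<^sup>2 \<le> 1 / x\<^sup>2"
        using frac_le[of 1 "x powr (- \<gamma>)" "x\<^sup>2" "(x + 1)\<^sup>2"] x by (simp add: power_mono)
      also have "1 / x\<^sup>2 = x powr (-2::real)"
        using x by (simp add: powr_minus divide_inverse powr_realpow)
      finally show ?thesis using x False by (simp add: stieltjes_kernel_def indicator_def)
    qed
  qed
qed

lemma stieltjes_kernel_rescale:
  assumes "0 < A"
  shows "stieltjes_kernel \<gamma> 1 (x / A) = A powr (\<gamma> + 2) * stieltjes_kernel \<gamma> A x"
proof (cases "0 < x")
  case True
  have "(x / A) powr (- \<gamma>) = x powr (- \<gamma>) / A powr (- \<gamma>)"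
    using True assms by (intro powr_divide)
  also have "\<dots> = x powr (- \<gamma>) * A powr \<gamma>"
    by (simp add: powr_minus divide_inverse)
  finally have "(x / A) powr (- \<gamma>) = x powr (- \<gamma>) * A powr \<gamma>" .
  moreover have "(x / A + 1)\<^sup>2 = (x + A)\<^sup>2 / A\<^sup>2"
    using assms by (simp add: field_simps)
  moreover have "A powr (\<gamma> + 2) = A powr \<gamma> * A\<^sup>2"
    using assms by (simp add: powr_add powr_realpow)
  ultimately show ?thesis
    using True assms by (simp add: stieltjes_kernel_def)
next
  case False
  then show ?thesis
    using assms by (simp add: stieltjes_kernel_def zero_less_divide_iff)
qed

lemma
  assumes "0 < \<gamma>" "\<gamma> < 1" "0 < A"
  shows integrable_stieltjes_kernel: "integrable lebesgue (stieltjes_kernel \<gamma> A)"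
    and integral_stieltjes_kernel:
      "integral\<^sup>L lebesgue (stieltjes_kernel \<gamma> A)
         = A powr (- \<gamma> - 1) * integral\<^sup>L lebesgue (stieltjes_kernel \<gamma> 1)"
proof -
  have rescale: "(\<lambda>x. stieltjes_kernel \<gamma> 1 (0 + (1 / A) * x)) = (\<lambda>x. A powr (\<gamma> + 2) * stieltjes_kernel \<gamma> A x)"
    using stieltjes_kernel_rescale[OF assms(3)] by simp
  have "integrable lebesgue (\<lambda>x. stieltjes_kernel \<gamma> 1 (0 + (1 / A) * x))"
    using assms by (intro lebesgue_integrable_real_affine integrable_stieltjes_kernel_1) auto
  then show "integrable lebesgue (stieltjes_kernel \<gamma> A)"
    using assms unfolding rescale by simp
  have "integral\<^sup>L lebesgue (stieltjes_kernel \<gamma> 1)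
      = \<bar>1 / A\<bar> *\<^sub>R integral\<^sup>L lebesgue (\<lambda>x. stieltjes_kernel \<gamma> 1 (0 + (1 / A) * x))"
    using assms by (intro lebesgue_integral_real_affine) simp
  also have "\<dots> = A powr (\<gamma> + 1) * integral\<^sup>L lebesgue (stieltjes_kernel \<gamma> A)"
    using assms unfolding rescale by (simp add: powr_add field_simps power2_eq_square)
  finally have "A powr (- \<gamma> - 1) * integral\<^sup>L lebesgue (stieltjes_kernel \<gamma> 1)
      = A powr (- \<gamma> - 1) * A powr (\<gamma> + 1) * integral\<^sup>L lebesgue (stieltjes_kernel \<gamma> A)"
    by simp
  then show "integral\<^sup>L lebesgue (stieltjes_kernel \<gamma> A)
      = A powr (- \<gamma> - 1) * integral\<^sup>L lebesgue (stieltjes_kernel \<gamma> 1)"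
    using assms by (simp add: powr_add[symmetric])
qed

lemma integral_stieltjes_kernel_1_pos:
  assumes "0 < \<gamma>" "\<gamma> < 1"
  shows "0 < integral\<^sup>L lebesgue (stieltjes_kernel \<gamma> 1)"
  using integrable_stieltjes_kernel_1[OF assms]
  by (rule integral_pos_of_pos_on_halfline) (simp_all add: stieltjes_kernel_def indicator_def)

lemma sum_sin_mult_stieltjes_kernel_sign:
  fixes r \<phi> x :: real
  assumes "0 < n" "0 < r" "0 < x"
  shows "\<exists>w>0. (\<Sum>j=1..n. sin (real j * zeta n - \<phi>)
                   * stieltjes_kernel \<gamma> (r\<^sup>2 - 2 * r * cos (real j * zeta n - \<phi>) + 1) x)
               = - sin (real n * \<phi>) * w"
proof -
  have "0 \<le> (r - 1)\<^sup>2" by simp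
  then have "2 * r < x + 1 + r\<^sup>2"
    using assms by (simp add: power2_eq_square algebra_simps)
  then obtain w where "0 < w" and w: "(\<Sum>j=1..n. sin (real j * zeta n - \<phi>)
      / (x + 1 + r\<^sup>2 - 2 * r * cos (real j * zeta n - \<phi>))\<^sup>2) = - sin (real n * \<phi>) * w"
    using sum_sin_div_shifted_cos_sq_sign[OF assms(1,2)] by blast
  have "(\<Sum>j=1..n. sin (real j * zeta n - \<phi>)
      * stieltjes_kernel \<gamma> (r\<^sup>2 - 2 * r * cos (real j * zeta n - \<phi>) + 1) x)
      = x powr (- \<gamma>) * (\<Sum>j=1..n. sin (real j * zeta n - \<phi>)
      / (x + 1 + r\<^sup>2 - 2 * r * cos (real j * zeta n - \<phi>))\<^sup>2)"
    using assms by (simp add: stieltjes_kernel_def sum_distrib_left algebra_simps)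
  with \<open>0 < w\<close> w assms show ?thesis
    by (intro exI[of _ "x powr (- \<gamma>) * w"]) simp
qed

lemma sum_sin_mult_powr_sign:
  fixes r \<phi> \<gamma> :: real
  assumes "0 < \<gamma>" "\<gamma> < 1" "0 < n" "0 < r"
    and dist_pos: "\<And>j. j \<in> {1..n} \<Longrightarrow> 0 < r\<^sup>2 - 2 * r * cos (real j * zeta n - \<phi>) + 1"
  shows "\<exists>w>0. (\<Sum>j=1..n. sin (real j * zeta n - \<phi>)
                   * (r\<^sup>2 - 2 * r * cos (real j * zeta n - \<phi>) + 1) powr (- \<gamma> - 1))
               = - sin (real n * \<phi>) * w"
proof -
  define \<theta> where "\<theta> j = real j * zeta n - \<phi>" for j :: nat
  define A where "A j = r\<^sup>2 - 2 * r * cos (\<theta> j) + 1" for j :: nat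
  define H where "H x = (\<Sum>j=1..n. sin (\<theta> j) * stieltjes_kernel \<gamma> (A j) x)" for x
  define I where "I = integral\<^sup>L lebesgue (stieltjes_kernel \<gamma> 1)"
  have A: "j \<in> {1..n} \<Longrightarrow> 0 < A j" for j
    unfolding A_def \<theta>_def by (rule dist_pos)
  have H_integrable: "integrable lebesgue H"
    unfolding H_def using assms(1,2) A
    by (intro Bochner_Integration.integrable_sum integrable_mult_right integrable_stieltjes_kernel) auto
  define S where "S = (\<Sum>j=1..n. sin (\<theta> j) * A j powr (- \<gamma> - 1))"
  have "integral\<^sup>L lebesgue H = (\<Sum>j=1..n. sin (\<theta> j) * integral\<^sup>L lebesgue (stieltjes_kernel \<gamma> (A j)))"
    unfolding H_def using assms(1,2) A
    by (subst Bochner_Integration.integral_sum) (auto intro: integrable_stieltjes_kernel)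
  also have "\<dots> = I * S"
    unfolding S_def I_def sum_distrib_left
    by (intro sum.cong refl) (simp add: integral_stieltjes_kernel[OF assms(1,2) A])
  finally have "integral\<^sup>L lebesgue H = I * S" .
  moreover have "\<exists>w>0. integral\<^sup>L lebesgue H = - sin (real n * \<phi>) * w"
  proof (rule integral_eq_sign_times_pos[OF H_integrable])
    show "H x = 0" if "x \<le> 0" for x
      using that by (simp add: H_def stieltjes_kernel_def)
    show "\<exists>w>0. H x = - sin (real n * \<phi>) * w" if "0 < x" for x
      using sum_sin_mult_stieltjes_kernel_sign[OF assms(3,4) that]
      unfolding H_def A_def \<theta>_def .
  qed
  ultimately obtain w where "0 < w" "I * S = - sin (real n * \<phi>) * w"
    by auto
  moreover have "0 < I"
    unfolding I_def using assms(1,2) by (rule integral_stieltjes_kernel_1_pos)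
  ultimately have "0 < w / I" "S = - sin (real n * \<phi>) * (w / I)"
    by (auto simp: field_simps)
  then show ?thesis
    unfolding S_def A_def \<theta>_def by blast
qed

section \<open>The Maxwell-ring potential\<close>

lemma norm_of_real_minus_cis_sq:
  "(cmod (complex_of_real r - cis \<theta>))\<^sup>2 = r\<^sup>2 - 2 * r * cos \<theta> + 1"
  unfolding cmod_power2 by (simp add: power2_eq_square algebra_simps)

lemma phi_alpha_norm_of_real_minus_cis:
  "phi_alpha \<alpha> (cmod (complex_of_real r - cis \<theta>))
     = (r\<^sup>2 - 2 * r * cos \<theta> + 1) powr ((1 - \<alpha>) / 2) / (\<alpha> - 1)"
proof -
  define d where "d = cmod (complex_of_real r - cis \<theta>)"
  have "d = (d\<^sup>2) powr (1 / 2)"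
    by (simp add: d_def powr_half_sqrt)
  then have "d powr (1 - \<alpha>) = (d\<^sup>2) powr ((1 - \<alpha>) / 2)"
    by (metis powr_powr times_divide_eq_left mult_1)
  then show ?thesis
    by (simp add: phi_alpha_def d_def norm_of_real_minus_cis_sq)
qed

lemma phi_alpha_dist_has_real_derivative:
  assumes "\<alpha> \<noteq> 1" "0 < r\<^sup>2 - 2 * r * cos (t - \<psi>) + 1"
  shows "((\<lambda>\<psi>. phi_alpha \<alpha> (cmod (complex_of_real r - cis (t - \<psi>)))) has_real_derivative
           r * sin (t - \<psi>) * (r\<^sup>2 - 2 * r * cos (t - \<psi>) + 1) powr (- ((\<alpha> - 1) / 2) - 1)) (at \<psi>)"
proof -
  define A where "A \<psi> = r\<^sup>2 - 2 * r * cos (t - \<psi>) + 1" for \<psi>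
  have "(A has_real_derivative - (2 * r * sin (t - \<psi>))) (at \<psi>)"
    unfolding A_def by (auto intro!: derivative_eq_intros)
  from DERIV_fun_powr[OF this, of "(1 - \<alpha>) / 2"] assms(2)
  have "((\<lambda>\<psi>. A \<psi> powr ((1 - \<alpha>) / 2) / (\<alpha> - 1)) has_real_derivative
      (1 - \<alpha>) / 2 * A \<psi> powr ((1 - \<alpha>) / 2 - 1) * - (2 * r * sin (t - \<psi>)) / (\<alpha> - 1)) (at \<psi>)"
    unfolding A_def by (intro DERIV_cdivide) simp
  moreover have "(1 - \<alpha>) / 2 * A \<psi> powr ((1 - \<alpha>) / 2 - 1) * - (2 * r * sin (t - \<psi>)) / (\<alpha> - 1)
      = r * sin (t - \<psi>) * A \<psi> powr (- ((\<alpha> - 1) / 2) - 1)"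
  proof -
    have "(1 - \<alpha>) / 2 - 1 = - ((\<alpha> - 1) / 2) - 1" by (simp add: field_simps)
    then show ?thesis using assms(1) by (simp add: field_simps)
  qed
  ultimately show ?thesis
    unfolding phi_alpha_norm_of_real_minus_cis A_def by simp
qed

lemma maxwell_s_pos:
  assumes "2 \<le> n"
  shows "0 < maxwell_s n \<alpha>"
proof -
  have sin_pos: "0 < sin (real j * zeta n / 2)" if "j \<in> {1..n - 1}" for j
    using that assms by (intro sin_gt_zero) (auto simp: zeta_def field_simps)
  have "0 < sin (real j * zeta n / 2) powr (- (\<alpha> - 1))" if "j \<in> {1..n - 1}" for j
    using sin_pos[OF that] by simp
  then have "0 < (\<Sum>j = 1..n - 1. sin (real j * zeta n / 2) powr (- (\<alpha> - 1)))"
    using assms by (intro sum_pos) auto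
  then show ?thesis
    unfolding maxwell_s_def by simp
qed

lemma maxwell_dom_dist_pos:
  assumes "maxwell_dom n r \<phi>" "j \<in> {1..n}"
  shows "0 < r\<^sup>2 - 2 * r * cos (real j * zeta n - \<phi>) + 1"
proof -
  have "complex_of_real r \<noteq> cis (real j * zeta n - \<phi>)"
  proof
    assume "complex_of_real r = cis (real j * zeta n - \<phi>)"
    then have "complex_of_real r * cis \<phi> = cis (real j * zeta n)"
      by (simp add: cis_mult)
    with assms show False
      unfolding maxwell_dom_def by blast
  qed
  then show ?thesis
    by (simp flip: norm_of_real_minus_cis_sq)
qed

lemma maxwell_V_has_real_derivative:
  assumes "maxwell_dom n r \<phi>" "\<alpha> \<noteq> 1"
  shows "((\<lambda>\<psi>. maxwell_V n \<alpha> \<mu> r \<psi>) has_real_derivative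
           r / (maxwell_s n \<alpha> + \<mu>) * (\<Sum>j=1..n. sin (real j * zeta n - \<phi>)
             * (r\<^sup>2 - 2 * r * cos (real j * zeta n - \<phi>) + 1) powr (- ((\<alpha> - 1) / 2) - 1))) (at \<phi>)"
proof -
  have "((\<lambda>\<psi>. maxwell_V n \<alpha> \<mu> r \<psi>) has_real_derivative
      0 + (\<Sum>j=1..n. 1 / (maxwell_s n \<alpha> + \<mu>) * (r * sin (real j * zeta n - \<phi>)
             * (r\<^sup>2 - 2 * r * cos (real j * zeta n - \<phi>) + 1) powr (- ((\<alpha> - 1) / 2) - 1)))) (at \<phi>)"
    unfolding maxwell_V_def[abs_def]
    using assms maxwell_dom_dist_pos[OF assms(1)]
    by (intro DERIV_add DERIV_const DERIV_sum DERIV_cmult phi_alpha_dist_has_real_derivative) auto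
  then show ?thesis
    by (simp add: sum_distrib_left mult_ac)
qed

theorem mainTheorem9:
  fixes n :: nat and \<alpha> \<mu> :: real
  assumes "1 < \<alpha>" and "\<alpha> < 3" and "2 \<le> n" and "0 \<le> \<mu>"
  shows "\<exists>\<omega> :: real \<Rightarrow> real \<Rightarrow> real.
           \<forall>r \<phi>. maxwell_dom n r \<phi> \<longrightarrow>
             0 < \<omega> r \<phi> \<and>
             ((\<lambda>\<psi>. maxwell_V n \<alpha> \<mu> r \<psi>) has_real_derivative
                (- sin (real n * \<phi>) * \<omega> r \<phi>)) (at \<phi>)"
proof -
  have "\<exists>w>0. ((\<lambda>\<psi>. maxwell_V n \<alpha> \<mu> r \<psi>) has_real_derivative (- sin (real n * \<phi>) * w)) (at \<phi>)"
    if dom: "maxwell_dom n r \<phi>" for r \<phi>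
  proof -
    have "0 < r" using dom by (simp add: maxwell_dom_def)
    obtain w where "0 < w" and w: "(\<Sum>j=1..n. sin (real j * zeta n - \<phi>)
        * (r\<^sup>2 - 2 * r * cos (real j * zeta n - \<phi>) + 1) powr (- ((\<alpha> - 1) / 2) - 1))
        = - sin (real n * \<phi>) * w"
      using sum_sin_mult_powr_sign[of "(\<alpha> - 1) / 2" n r \<phi>] assms \<open>0 < r\<close>
        maxwell_dom_dist_pos[OF dom] by auto
    have "0 < maxwell_s n \<alpha> + \<mu>"
      using maxwell_s_pos[OF assms(3), of \<alpha>] assms(4) by simp
    with \<open>0 < r\<close> \<open>0 < w\<close> have "0 < r / (maxwell_s n \<alpha> + \<mu>) * w"
      by simp
    with maxwell_V_has_real_derivative[OF dom, of \<alpha> \<mu>] assms(1) show ?thesis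
      unfolding w by (intro exI[of _ "r / (maxwell_s n \<alpha> + \<mu>) * w"]) (simp add: mult_ac)
  qed
  then show ?thesis
    by metis
qed

end
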